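(* For $\beta>0$ consider the $(\beta,S)$-coalescent and let $\lambda_n$ denote its total coalescence rate when there are $n$ blocks. If $\beta\in(0,1)$, $$\lim_{n\to\infty}n^{2(\beta-1)}\lambda_n=\frac{2^{\beta-1}\Gamma(\beta)}{1-\beta}.$$ If $\beta=1$, $$\lim_{n\to\infty}\frac{\lambda_n}{\log n}=2.$$
   Context: For $\beta>0$, the $(\beta,S)$-coalescent is the exchangeable coalescent (partition-valued Markov process) described as follows: whenever there are $b$ blocks, for each $k\in\mathbb{N}$, at rate $k^{-\beta}$ all current blocks are thrown independently and uniformly at random into $k$ boxes and all blocks in the same box merge (there is no Kingman/pairwise component). The total coalescence rate $\lambda_n$ is the total rate at which an event changing the partition occurs when there are $n$ blocks; equivalently $\lambda_n=\sum_{k\ge1}k^{-\beta}\,\mathbb{P}(\mathcal C^k_n)$, where $\mathcal C^k_n$ is the event that, when $n$ balls are thrown independently and uniformly into $k$ boxes, at least two balls land in the same box. *)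

theory Defs
  imports "HOL-Analysis.Analysis" "HOL-Library.FuncSet"
begin

text \<open>Probability of the event C^k_n: throwing n balls independently and uniformly
  into k boxes, at least two balls land in the same box. The sample space is the
  set of all maps from the n balls to the k boxes, with uniform measure.\<close>
definition coll_prob :: "nat \<Rightarrow> nat \<Rightarrow> real" where
  "coll_prob n k =
     real (card {f \<in> {..<n} \<rightarrow>\<^sub>E {..<k}. \<not> inj_on f {..<n}})
     / real (card ({..<n} \<rightarrow>\<^sub>E ({..<k}::nat set)))"

text \<open>Total coalescence rate of the (beta,S)-coalescent with n blocks:
  lambda_n = sum over k >= 1 of k^(-beta) P(C^k_n).\<close>
definition coal_rate :: "real \<Rightarrow> nat \<Rightarrow> real" where
  "coal_rate \<beta> n = (\<Sum>k. real (Suc k) powr (-\<beta>) * coll_prob n (Suc k))"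

end

theory Submission
  imports Defs "HOL-Real_Asymp.Real_Asymp"
begin

text \<open>
  Let \<open>m = n(n-1)/2\<close> be the number of pairs of balls. The probability that \<open>n\<close> balls in \<open>k\<close>
  boxes collide lies between \<open>1 - exp (-m/k)\<close> and \<open>1 - exp (-m/(k-n+1))\<close>, so up to an error
  \<open>\<Sum>k<n. k^(-\<beta>) = O(n^(1-\<beta>) log n)\<close> the rate \<open>\<lambda>\<^sub>n\<close> equals the Poissonized rate
  \<open>G(m) = \<Sum>k. k^(-\<beta>) (1 - exp (-m/k))\<close>. The substitution \<open>u = a/k\<close> makes \<open>a^(\<beta>-1) G(a)\<close>
  a Riemann sum of \<open>u^(\<beta>-2) (1 - exp (-u))\<close> on \<open>(0,a]\<close>; the density is monotone, so the sum
  converges to the integral over \<open>(0,\<infinity>)\<close>, which integration by parts turns into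
  \<open>\<Gamma>(\<beta>)/(1-\<beta>)\<close>. As \<open>m \<sim> n\<^sup>2/2\<close> this gives the case \<open>\<beta> < 1\<close>. For \<open>\<beta> = 1\<close>, bounding
  \<open>P(C\<^sup>k\<^sub>n)\<close> below by \<open>1 - exp (-c)\<close> for \<open>k \<le> m/c\<close> and above by \<open>min 1 (m/k)\<close> gives
  \<open>(1 - exp (-c)) log (m/c) \<le> \<lambda>\<^sub>n \<le> log (m+1) + 2\<close>, and \<open>log m \<sim> 2 log n\<close>.
\<close>

section \<open>Collision probabilities\<close>

definition distinct_prob :: "nat \<Rightarrow> nat \<Rightarrow> real" where
  "distinct_prob n k = (\<Prod>i<n. real (k - i) / real k)"

definition pairs :: "nat \<Rightarrow> real" where
  "pairs n = real n * (real n - 1) / 2"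

lemma coll_prob_eq_1_minus_distinct_prob:
  assumes "0 < k"
  shows "coll_prob n k = 1 - distinct_prob n k"
proof -
  let ?A = "{..<n} \<rightarrow>\<^sub>E {..<k}"
  have fin: "finite ?A" by (simp add: finite_PiE)
  have card_A: "card ?A = k ^ n" by (simp add: card_funcsetE)
  have card_inj: "card {f \<in> ?A. inj_on f {..<n}} = (\<Prod>i<n. k - i)"
    using card_inj_on_subset_funcset[of "{..<n}" "{..<k}" "{..<n}"]
    by (simp add: atLeast0LessThan)
  have "{f \<in> ?A. \<not> inj_on f {..<n}} = ?A - {f \<in> ?A. inj_on f {..<n}}" by auto
  then have card_coll: "card {f \<in> ?A. \<not> inj_on f {..<n}} = k ^ n - (\<Prod>i<n. k - i)"
    using fin card_A card_inj by (simp add: card_Diff_subset)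
  have "(\<Prod>i<n. k - i) \<le> k ^ n"
    using card_inj card_A fin by (metis (no_types, lifting) card_mono mem_Collect_eq subsetI)
  then have "coll_prob n k = (real (k ^ n) - real (\<Prod>i<n. k - i)) / real (k ^ n)"
    unfolding coll_prob_def card_coll card_A by (simp add: of_nat_diff)
  also have "\<dots> = 1 - real (\<Prod>i<n. k - i) / real (k ^ n)"
    using assms by (simp add: field_simps)
  also have "real (\<Prod>i<n. k - i) / real (k ^ n) = distinct_prob n k"
    unfolding distinct_prob_def by (simp add: prod_dividef)
  finally show ?thesis .
qed

lemma sum_lessThan_of_nat_eq_pairs: "(\<Sum>i<n. real i) = pairs n"
  unfolding pairs_def by (induction n) (auto simp: field_simps)

lemma pairs_nonneg: "0 \<le> pairs n"
  unfolding pairs_def by (cases n) auto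

lemma pairs_ge_1: "2 \<le> n \<Longrightarrow> 1 \<le> pairs n"
  unfolding pairs_def by (simp add: mult_mono[of 2 "real n" 1 "real n - 1", simplified])

lemma distinct_prob_nonneg: "0 \<le> distinct_prob n k"
  unfolding distinct_prob_def by (intro prod_nonneg) auto

lemma distinct_prob_le_1: "distinct_prob n k \<le> 1"
  unfolding distinct_prob_def
  by (intro prod_le_1) (auto simp: divide_le_eq_1)

lemma distinct_prob_le_exp:
  assumes "0 < k"
  shows "distinct_prob n k \<le> exp (- pairs n / real k)"
proof -
  have "distinct_prob n k \<le> (\<Prod>i<n. exp (- real i / real k))"
    unfolding distinct_prob_def
  proof (intro prod_mono conjI)
    fix i
    show "0 \<le> real (k - i) / real k" by simp
    show "real (k - i) / real k \<le> exp (- real i / real k)"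
    proof (cases "i \<le> k")
      case True
      then have "real (k - i) / real k = 1 + (- real i / real k)"
        using assms by (simp add: of_nat_diff field_simps)
      also have "\<dots> \<le> exp (- real i / real k)" by (rule exp_ge_add_one_self)
      finally show ?thesis .
    qed simp
  qed
  also have "\<dots> = exp (\<Sum>i<n. - real i / real k)" by (simp add: exp_sum)
  also have "(\<Sum>i<n. - real i / real k) = - pairs n / real k"
    by (simp add: sum_negf sum_divide_distrib[symmetric] sum_lessThan_of_nat_eq_pairs)
  finally show ?thesis .
qed

lemma exp_le_distinct_prob:
  assumes "n \<le> k"
  shows "exp (- pairs n / real (k - n + 1)) \<le> distinct_prob n k"
proof -
  have "- pairs n / real (k - n + 1) = (\<Sum>i<n. - real i / real (k - n + 1))"
    by (simp add: sum_negf sum_divide_distrib[symmetric] sum_lessThan_of_nat_eq_pairs)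
  then have "exp (- pairs n / real (k - n + 1)) = (\<Prod>i<n. exp (- real i / real (k - n + 1)))"
    by (simp add: exp_sum)
  also have "\<dots> \<le> distinct_prob n k"
    unfolding distinct_prob_def
  proof (intro prod_mono conjI)
    fix i assume "i \<in> {..<n}"
    then have ik: "i < k" and "real (k - n + 1) \<le> real (k - i)" using assms by auto
    then have "exp (- real i / real (k - n + 1)) \<le> exp (- real i / real (k - i))"
      by (auto intro!: divide_left_mono mult_pos_pos)
    also have "\<dots> = inverse (exp (real i / real (k - i)))"
      by (simp add: exp_minus)
    also have "\<dots> \<le> inverse (1 + real i / real (k - i))"
      using ik by (intro le_imp_inverse_le exp_ge_add_one_self) (auto intro: add_pos_nonneg)
    also have "\<dots> = real (k - i) / real k"
      using ik by (simp add: of_nat_diff field_simps)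
    finally show "exp (- real i / real (k - n + 1)) \<le> real (k - i) / real k" .
  qed simp
  finally show ?thesis .
qed

text \<open>The Weierstrass product inequality \<open>\<Prod>(1 - x\<^sub>i) \<ge> 1 - \<Sum>x\<^sub>i\<close>.\<close>
lemma one_minus_pairs_div_le_distinct_prob:
  assumes "0 < k"
  shows "1 - pairs n / real k \<le> distinct_prob n k"
proof -
  have "1 - (\<Sum>i<n. real i / real k) \<le> (\<Prod>i<n. real (k - i) / real k)"
  proof (induction n)
    case (Suc n)
    let ?P = "\<Prod>i<n. real (k - i) / real k"
    have P: "0 \<le> ?P" "?P \<le> 1"
      using distinct_prob_nonneg[of n k] distinct_prob_le_1[of n k] by (auto simp: distinct_prob_def)
    have "1 - real n / real k \<le> real (k - n) / real k"
      using assms by (cases "n \<le> k") (auto simp: of_nat_diff field_simps)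
    then have "?P * (1 - real n / real k) \<le> ?P * (real (k - n) / real k)"
      using P by (intro mult_left_mono)
    moreover have "?P * (real n / real k) \<le> real n / real k"
      using P by (intro mult_left_le_one_le) auto
    ultimately show ?case using Suc by (simp add: algebra_simps)
  qed simp
  then show ?thesis
    by (simp add: distinct_prob_def sum_divide_distrib[symmetric] sum_lessThan_of_nat_eq_pairs)
qed

lemma coll_prob_nonneg: "0 \<le> coll_prob n k"
  unfolding coll_prob_def by simp

lemma coll_prob_le_1: "0 < k \<Longrightarrow> coll_prob n k \<le> 1"
  using distinct_prob_nonneg by (simp add: coll_prob_eq_1_minus_distinct_prob)

lemma coll_prob_le_pairs_div: "0 < k \<Longrightarrow> coll_prob n k \<le> pairs n / real k"
  using one_minus_pairs_div_le_distinct_prob[of k n] by (simp add: coll_prob_eq_1_minus_distinct_prob)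

lemma one_minus_exp_le_coll_prob: "0 < k \<Longrightarrow> 1 - exp (- pairs n / real k) \<le> coll_prob n k"
  using distinct_prob_le_exp by (simp add: coll_prob_eq_1_minus_distinct_prob)

lemma coll_prob_le_one_minus_exp:
  "n \<le> k \<Longrightarrow> 0 < k \<Longrightarrow> coll_prob n k \<le> 1 - exp (- pairs n / real (k - n + 1))"
  using exp_le_distinct_prob by (simp add: coll_prob_eq_1_minus_distinct_prob)


section \<open>The Poissonized rate\<close>

text \<open>The rate obtained by replacing \<open>P(C\<^sup>k\<^sub>n)\<close> with its Poisson approximation
  \<open>1 - exp (-a/k)\<close>, where \<open>a\<close> stands for the number of pairs.\<close>
definition poisson_term :: "real \<Rightarrow> real \<Rightarrow> real \<Rightarrow> real" where
  "poisson_term \<beta> a x = x powr (-\<beta>) * (1 - exp (- a / x))"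

definition poissonized_rate :: "real \<Rightarrow> real \<Rightarrow> real" where
  "poissonized_rate \<beta> a = (\<Sum>k. poisson_term \<beta> a (real (Suc k)))"

lemma summable_Suc_powr: "s < -1 \<Longrightarrow> summable (\<lambda>k. real (Suc k) powr s)"
  using summable_real_powr_iff[of s] summable_Suc_iff[of "\<lambda>n. real n powr s"] by simp

lemma powr_mult_divide_self:
  fixes x :: real
  assumes "0 < x"
  shows "x powr (-\<beta>) * (a / x) = a * x powr (-\<beta> - 1)"
  using assms powr_diff[of x "-\<beta>" 1] by simp

lemma poisson_term_nonneg: "0 \<le> a \<Longrightarrow> 0 < x \<Longrightarrow> 0 \<le> poisson_term \<beta> a x"
  unfolding poisson_term_def by simp

lemma poisson_term_le_powr: "0 \<le> a \<Longrightarrow> 0 < x \<Longrightarrow> poisson_term \<beta> a x \<le> x powr (-\<beta>)"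
  unfolding poisson_term_def by (simp add: mult_left_le)

lemma poisson_term_le:
  assumes "0 \<le> a" "0 < x"
  shows "poisson_term \<beta> a x \<le> a * x powr (-\<beta> - 1)"
proof -
  have "1 - exp (- a / x) \<le> a / x"
    using exp_ge_add_one_self[of "- a / x"] by simp
  then have "poisson_term \<beta> a x \<le> x powr (-\<beta>) * (a / x)"
    unfolding poisson_term_def by (rule mult_left_mono) simp
  then show ?thesis using powr_mult_divide_self[OF assms(2)] by simp
qed

lemma summable_poisson_term:
  assumes "0 < \<beta>" "0 \<le> a"
  shows "summable (\<lambda>k. poisson_term \<beta> a (real (Suc k)))"
proof (rule summable_comparison_test')
  show "summable (\<lambda>k. a * real (Suc k) powr (-\<beta> - 1))"
    using assms by (intro summable_mult summable_Suc_powr) auto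
  show "norm (poisson_term \<beta> a (real (Suc k))) \<le> a * real (Suc k) powr (-\<beta> - 1)" for k
    using assms poisson_term_nonneg[of a "real (Suc k)" \<beta>] poisson_term_le[of a "real (Suc k)" \<beta>]
    by simp
qed

lemma poissonized_rate_nonneg: "0 < \<beta> \<Longrightarrow> 0 \<le> a \<Longrightarrow> 0 \<le> poissonized_rate \<beta> a"
  unfolding poissonized_rate_def
  by (intro suminf_nonneg summable_poisson_term poisson_term_nonneg) auto

lemma summable_coal_rate:
  assumes "0 < \<beta>"
  shows "summable (\<lambda>k. real (Suc k) powr (-\<beta>) * coll_prob n (Suc k))"
proof (rule summable_comparison_test')
  show "summable (\<lambda>k. pairs n * real (Suc k) powr (-\<beta> - 1))"
    using assms by (intro summable_mult summable_Suc_powr) auto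
  fix k
  have "real (Suc k) powr (-\<beta>) * coll_prob n (Suc k) \<le> real (Suc k) powr (-\<beta>) * (pairs n / real (Suc k))"
    using coll_prob_le_pairs_div[of "Suc k" n] by (intro mult_left_mono) auto
  then show "norm (real (Suc k) powr (-\<beta>) * coll_prob n (Suc k)) \<le> pairs n * real (Suc k) powr (-\<beta> - 1)"
    using coll_prob_nonneg[of n "Suc k"] by (simp only: powr_mult_divide_self) simp
qed

lemma poissonized_rate_le_coal_rate:
  assumes "0 < \<beta>"
  shows "poissonized_rate \<beta> (pairs n) \<le> coal_rate \<beta> n"
  unfolding poissonized_rate_def poisson_term_def coal_rate_def
  using assms one_minus_exp_le_coll_prob[of "Suc _" n]
  by (intro suminf_le mult_left_mono summable_coal_rate
        summable_poisson_term[unfolded poisson_term_def] pairs_nonneg) auto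

text \<open>Up to the first \<open>n - 1\<close> terms, the rate is dominated by the Poissonized rate with the
  box index shifted by \<open>n - 1\<close>.\<close>
lemma coal_rate_le_poissonized_rate:
  assumes "0 < \<beta>" "1 \<le> n"
  shows "coal_rate \<beta> n \<le> poissonized_rate \<beta> (pairs n) + (\<Sum>k<n-1. real (Suc k) powr (-\<beta>))"
proof -
  define b where "b k = (if Suc k < n then real (Suc k) powr (-\<beta>)
      else poisson_term \<beta> (pairs n) (real (Suc k - n + 1)))" for k
  have shift: "b (k + (n - 1)) = poisson_term \<beta> (pairs n) (real (Suc k))" for k
    using assms by (simp add: b_def)
  have "summable (\<lambda>k. b (k + (n - 1)))"
    unfolding shift using assms by (intro summable_poisson_term pairs_nonneg)
  then have sb: "summable b" by (simp add: summable_iff_shift)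
  have "coal_rate \<beta> n \<le> suminf b"
    unfolding coal_rate_def
  proof (intro suminf_le summable_coal_rate sb assms)
    fix k
    show "real (Suc k) powr - \<beta> * coll_prob n (Suc k) \<le> b k"
    proof (cases "Suc k < n")
      case True
      then show ?thesis using coll_prob_le_1[of "Suc k" n] by (simp add: b_def mult_left_le)
    next
      case False
      have "real (Suc k) powr (-\<beta>) \<le> real (Suc k - n + 1) powr (-\<beta>)"
        using False assms by (intro powr_mono2') auto
      then have "real (Suc k) powr - \<beta> * coll_prob n (Suc k)
          \<le> real (Suc k - n + 1) powr (-\<beta>) * coll_prob n (Suc k)"
        using coll_prob_nonneg by (rule mult_right_mono)
      also have "\<dots> \<le> b k"
        using False coll_prob_le_one_minus_exp[of n "Suc k"]
        by (simp add: b_def poisson_term_def mult_left_mono)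
      finally show ?thesis .
    qed
  qed
  also have "suminf b = (\<Sum>k. b (k + (n - 1))) + sum b {..<n-1}"
    by (rule suminf_split_initial_segment[OF sb])
  also have "(\<Sum>k. b (k + (n - 1))) = poissonized_rate \<beta> (pairs n)"
    unfolding shift poissonized_rate_def ..
  also have "sum b {..<n-1} = (\<Sum>k<n-1. real (Suc k) powr (-\<beta>))"
    by (intro sum.cong) (auto simp: b_def)
  finally show ?thesis .
qed

section \<open>The limiting integral\<close>

text \<open>The substitution \<open>u = a/x\<close> turns \<open>\<integral> poisson_term \<beta> a x dx\<close> into
  \<open>a^(1-\<beta>) \<integral> rate_density \<beta> u du\<close>.\<close>
definition rate_density :: "real \<Rightarrow> real \<Rightarrow> real" where
  "rate_density \<beta> u = u powr (\<beta> - 2) * (1 - exp (- u))"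

lemma rate_density_nonneg: "0 \<le> u \<Longrightarrow> 0 \<le> rate_density \<beta> u"
  unfolding rate_density_def by (intro mult_nonneg_nonneg) auto

lemma borel_measurable_rate_density [measurable]: "rate_density \<beta> \<in> borel_measurable borel"
  unfolding rate_density_def by measurable

text \<open>Integration by parts against \<open>u^(\<beta>-1) (1 - exp (-u))\<close>, whose derivative is
  \<open>u^(\<beta>-1) exp (-u) - (1 - \<beta>) rate_density \<beta> u\<close>.\<close>
lemma rate_density_has_integral:
  assumes "0 < c" "c \<le> d" "\<beta> < 1"
  shows "(rate_density \<beta> has_integral
     (integral {c..d} (\<lambda>u. u powr (\<beta> - 1) * exp (- u))
        + c powr (\<beta> - 1) * (1 - exp (- c)) - d powr (\<beta> - 1) * (1 - exp (- d))) / (1 - \<beta>)) {c..d}"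
proof -
  define F where "F u = u powr (\<beta> - 1) * (1 - exp (- u))" for u
  define g where "g u = u powr (\<beta> - 1) * exp (- u)" for u
  have "(F has_vector_derivative g u - (1 - \<beta>) * rate_density \<beta> u) (at u within {c..d})"
    if "u \<in> {c..d}" for u
  proof -
    have u: "0 < u" using that assms by auto
    then have "(F has_real_derivative (\<beta> - 1) * u powr (\<beta> - 2) * (1 - exp (- u)) + g u) (at u)"
      unfolding F_def g_def by (auto intro!: derivative_eq_intros simp: algebra_simps)
    then show ?thesis
      by (simp add: rate_density_def algebra_simps has_real_derivative_iff_has_vector_derivative[symmetric]
          has_field_derivative_at_within)
  qed
  then have F: "((\<lambda>u. g u - (1 - \<beta>) * rate_density \<beta> u) has_integral F d - F c) {c..d}"
    by (rule fundamental_theorem_of_calculus[OF assms(2)])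
  have "(g has_integral integral {c..d} g) {c..d}"
    using assms unfolding g_def
    by (intro integrable_integral integrable_continuous_real continuous_intros) auto
  from has_integral_diff[OF this F]
  have "((\<lambda>u. (1 - \<beta>) * rate_density \<beta> u) has_integral integral {c..d} g - (F d - F c)) {c..d}"
    by simp
  then have "(rate_density \<beta> has_integral (integral {c..d} g - (F d - F c)) / (1 - \<beta>)) {c..d}"
    using assms by (subst (asm) has_integral_mult_right_iff) auto
  moreover have "integral {c..d} g - (F d - F c) = integral {c..d} (\<lambda>u. u powr (\<beta> - 1) * exp (- u))
      + c powr (\<beta> - 1) * (1 - exp (- c)) - d powr (\<beta> - 1) * (1 - exp (- d))"
    unfolding F_def g_def by simp
  ultimately show ?thesis by simp
qed

lemma nn_integral_indicator_incseq_LIMSEQ: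
  fixes f :: "real \<Rightarrow> real"
  assumes "incseq S" and [measurable]: "\<And>N. S N \<in> sets borel" "f \<in> borel_measurable borel"
  shows "(\<lambda>N. \<integral>\<^sup>+u. ennreal (indicator (S N) u * f u) \<partial>lborel)
      \<longlonglongrightarrow> (\<integral>\<^sup>+u. ennreal (indicator (\<Union>N. S N) u * f u) \<partial>lborel)"
proof (rule nn_integral_LIMSEQ)
  show "incseq (\<lambda>N u. ennreal (indicator (S N) u * f u))"
  proof (rule incseq_SucI, rule le_funI)
    fix N u
    have "S N \<subseteq> S (Suc N)" using assms(1) by (simp add: incseq_Suc_iff)
    then show "ennreal (indicator (S N) u * f u) \<le> ennreal (indicator (S (Suc N)) u * f u)"
      by (cases "u \<in> S N"; cases "u \<in> S (Suc N)") auto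
  qed
  show "(\<lambda>u. ennreal (indicator (S N) u * f u)) \<in> borel_measurable lborel" for N
    by measurable
  fix u
  show "(\<lambda>N. ennreal (indicator (S N) u * f u)) \<longlonglongrightarrow> ennreal (indicator (\<Union>N. S N) u * f u)"
  proof (cases "u \<in> (\<Union>N. S N)")
    case True
    then obtain N0 where "u \<in> S N0" by blast
    then have "eventually (\<lambda>N. u \<in> S N) sequentially"
      using assms(1) unfolding eventually_sequentially incseq_def by blast
    then show ?thesis
      by (rule tendsto_eventually[OF eventually_mono]) (use True in simp)
  qed simp
qed

lemma pos_of_mem_Icc_exhausting: "u \<in> {1 / (real N + 1)..real N + 1} \<Longrightarrow> 0 < u"
  using order_less_le_trans[of 0 "1 / (real N + 1)" u] by simp

lemma incseq_Icc_exhausting: "incseq (\<lambda>N. {1 / (real N + 1)..real N + 1})"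
proof (rule incseq_SucI)
  fix N
  have "1 / (real (Suc N) + 1) \<le> 1 / (real N + 1)" by (simp add: frac_le)
  then show "{1 / (real N + 1)..real N + 1} \<subseteq> {1 / (real (Suc N) + 1)..real (Suc N) + 1}"
    by auto
qed

lemma UN_Icc_exhausting: "(\<Union>N. {1 / (real N + 1)..real N + 1}) = {0<..}"
proof (intro equalityI subsetI)
  fix u :: real assume "u \<in> {0<..}"
  then have u: "0 < u" by simp
  obtain N :: nat where N: "max u (1 / u) \<le> real N" using real_arch_simple by blast
  then have "1 / u \<le> real N + 1" by simp
  then have "1 / (real N + 1) \<le> u" using u by (simp add: field_simps)
  then show "u \<in> (\<Union>N. {1 / (real N + 1)..real N + 1})" using N by auto
qed (use pos_of_mem_Icc_exhausting in blast)

lemma nn_integral_gamma_density: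
  assumes "0 < \<beta>"
  shows "(\<integral>\<^sup>+u. ennreal (indicator {0<..} u * (u powr (\<beta> - 1) * exp (- u))) \<partial>lborel) = ennreal (Gamma \<beta>)"
  unfolding Gamma_conv_nn_integral_real[OF assms]
  by (intro nn_integral_cong) (auto simp: indicator_def exp_minus divide_inverse)

lemma gamma_integral_Icc_LIMSEQ:
  assumes "0 < \<beta>"
  shows "(\<lambda>N. integral {1 / (real N + 1)..real N + 1} (\<lambda>u. u powr (\<beta> - 1) * exp (- u)))
      \<longlonglongrightarrow> Gamma \<beta>"
proof (rule tendsto_ennrealD)
  let ?g = "\<lambda>u::real. u powr (\<beta> - 1) * exp (- u)"
  let ?S = "\<lambda>N. {1 / (real N + 1)..real N + 1}"
  have "(?g has_integral integral (?S N) ?g) (?S N)" for N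
    by (intro integrable_integral integrable_continuous_real continuous_intros)
      (auto dest: pos_of_mem_Icc_exhausting)
  then have "(\<integral>\<^sup>+u. ennreal (indicator (?S N) u * ?g u) \<partial>lborel) = ennreal (integral (?S N) ?g)" for N
    by (intro nn_integral_has_integral_lebesgue) auto
  then show "(\<lambda>N. ennreal (integral (?S N) ?g)) \<longlonglongrightarrow> ennreal (Gamma \<beta>)"
    using nn_integral_indicator_incseq_LIMSEQ[OF incseq_Icc_exhausting, of ?g]
    by (simp add: UN_Icc_exhausting nn_integral_gamma_density[OF assms])
  show "\<forall>\<^sub>F N in sequentially. 0 \<le> integral (?S N) ?g"
    by (intro always_eventually allI integral_nonneg integrable_continuous_real continuous_intros)
      (auto dest: pos_of_mem_Icc_exhausting)
qed (use assms Gamma_real_pos in auto)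

lemma nn_integral_rate_density:
  assumes "0 < \<beta>" "\<beta> < 1"
  shows "(\<integral>\<^sup>+u. ennreal (indicator {0<..} u * rate_density \<beta> u) \<partial>lborel) = ennreal (Gamma \<beta> / (1 - \<beta>))"
proof -
  define c :: "nat \<Rightarrow> real" where "c N = 1 / (real N + 1)" for N
  define d :: "nat \<Rightarrow> real" where "d N = real N + 1" for N
  define F where "F u = u powr (\<beta> - 1) * (1 - exp (- u))" for u
  define I where "I N = (integral {c N..d N} (\<lambda>u. u powr (\<beta> - 1) * exp (- u)) + F (c N) - F (d N))
    / (1 - \<beta>)" for N
  have c_pos: "0 < c N" and c_le_d: "c N \<le> d N" for N
    unfolding c_def d_def using order_trans[of "1 / (real N + 1)" 1 "real N + 1"] by simp_all
  have nn_Icc: "(\<integral>\<^sup>+u. ennreal (indicator {c N..d N} u * rate_density \<beta> u) \<partial>lborel) = ennreal (I N)" for N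
  proof (rule nn_integral_has_integral_lebesgue)
    show "(rate_density \<beta> has_integral I N) {c N..d N}"
      unfolding I_def F_def by (rule rate_density_has_integral[OF c_pos c_le_d assms(2)])
    show "0 \<le> rate_density \<beta> u" if "u \<in> {c N..d N}" for u
      using that c_pos[of N] by (intro rate_density_nonneg) simp
  qed
  have "incseq (\<lambda>N. {c N..d N})" "(\<Union>N. {c N..d N}) = {0<..}" "{c N..d N} \<in> sets borel" for N
    unfolding c_def d_def by (simp_all only: incseq_Icc_exhausting UN_Icc_exhausting sets_lborel) simp
  then have lim_nn: "(\<lambda>N. ennreal (I N)) \<longlonglongrightarrow> (\<integral>\<^sup>+u. ennreal (indicator {0<..} u * rate_density \<beta> u) \<partial>lborel)"
    using nn_integral_indicator_incseq_LIMSEQ[of "\<lambda>N. {c N..d N}" "rate_density \<beta>"]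
    unfolding nn_Icc by simp
  have F_0: "(F \<longlongrightarrow> 0) (at_right 0)" and F_top: "(F \<longlongrightarrow> 0) at_top"
    unfolding F_def using assms by real_asymp+
  have c_lim: "filterlim c (at_right 0) sequentially" and d_lim: "filterlim d at_top sequentially"
    unfolding c_def d_def by real_asymp+
  have "(\<lambda>N. integral {c N..d N} (\<lambda>u. u powr (\<beta> - 1) * exp (- u))) \<longlonglongrightarrow> Gamma \<beta>"
    unfolding c_def d_def by (rule gamma_integral_Icc_LIMSEQ[OF assms(1)])
  then have "I \<longlonglongrightarrow> (Gamma \<beta> + 0 - 0) / (1 - \<beta>)"
    unfolding I_def using filterlim_compose[OF F_0 c_lim] filterlim_compose[OF F_top d_lim]
    using assms by (intro tendsto_divide tendsto_diff tendsto_add tendsto_const) auto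
  then have "(\<lambda>N. ennreal (I N)) \<longlonglongrightarrow> ennreal (Gamma \<beta> / (1 - \<beta>))"
    by (intro tendsto_ennrealI) simp
  then show ?thesis
    by (rule LIMSEQ_unique[OF lim_nn])
qed

section \<open>Comparison of the Poissonized rate with the integral\<close>

text \<open>On the slab \<open>(a/(j+2), a/(j+1)]\<close> the density lies between its values at the endpoints,
  which reproduce the terms of the Poissonized rate.\<close>
definition slab :: "real \<Rightarrow> nat \<Rightarrow> real set" where
  "slab a j = {a / (real j + 2) <.. a / (real j + 1)}"

definition truncated_mass :: "real \<Rightarrow> real \<Rightarrow> ennreal" where
  "truncated_mass \<beta> a = (\<integral>\<^sup>+u. ennreal (indicator {0<..a} u * rate_density \<beta> u) \<partial>lborel)"

definition zeta_series :: "real \<Rightarrow> real" where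
  "zeta_series \<beta> = (\<Sum>j. real (Suc j) powr (-1 - \<beta>))"

lemma mem_slab_iff:
  assumes "0 < a"
  shows "u \<in> slab a j \<longleftrightarrow> 0 < u \<and> u \<le> a \<and> j = nat \<lfloor>a / u\<rfloor> - 1"
proof
  assume u: "u \<in> slab a j"
  have "0 < a / (real j + 2)" using assms by simp
  then have u_pos: "0 < u" using u unfolding slab_def by auto
  have "u \<le> a / (real j + 1)" using u unfolding slab_def by auto
  also have "\<dots> \<le> a" using assms by (simp add: divide_le_eq)
  finally have "u \<le> a" .
  have "real j + 1 \<le> a / u" "a / u < real j + 2"
    using u u_pos unfolding slab_def by (auto simp: field_simps)
  then have "\<lfloor>a / u\<rfloor> = int j + 1" by (simp add: floor_eq_iff)
  with u_pos \<open>u \<le> a\<close> show "0 < u \<and> u \<le> a \<and> j = nat \<lfloor>a / u\<rfloor> - 1" by simp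
next
  assume u: "0 < u \<and> u \<le> a \<and> j = nat \<lfloor>a / u\<rfloor> - 1"
  then have "1 \<le> a / u" by (simp add: field_simps)
  then have "1 \<le> nat \<lfloor>a / u\<rfloor>" by linarith
  then have "real j + 1 = real (nat \<lfloor>a / u\<rfloor>)" using u by (simp add: of_nat_diff)
  also have "\<dots> = of_int \<lfloor>a / u\<rfloor>" using \<open>1 \<le> nat \<lfloor>a / u\<rfloor>\<close> by simp
  finally have "real j + 1 = of_int \<lfloor>a / u\<rfloor>" .
  then have "real j + 1 \<le> a / u" "a / u < real j + 2" by linarith+
  then show "u \<in> slab a j" using u unfolding slab_def by (auto simp: field_simps)
qed

lemma suminf_indicator_slab:
  assumes "0 < a"
  shows "(\<Sum>j. ennreal (indicator (slab a j) u * f u)) = ennreal (indicator {0<..a} u * f u)"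
proof (cases "0 < u \<and> u \<le> a")
  case True
  let ?j = "nat \<lfloor>a / u\<rfloor> - 1"
  have "(\<Sum>j. ennreal (indicator (slab a j) u * f u)) = (\<Sum>j\<in>{?j}. ennreal (indicator (slab a j) u * f u))"
    by (rule suminf_finite) (use mem_slab_iff[OF assms] in auto)
  then show ?thesis using True mem_slab_iff[OF assms] by simp
next
  case False
  then have "u \<notin> slab a j" for j using mem_slab_iff[OF assms] by blast
  then show ?thesis using False by simp
qed

lemma truncated_mass_eq_suminf_slab:
  assumes "0 < a"
  shows "truncated_mass \<beta> a = (\<Sum>j. \<integral>\<^sup>+u. ennreal (indicator (slab a j) u * rate_density \<beta> u) \<partial>lborel)"
proof -
  have "truncated_mass \<beta> a = (\<integral>\<^sup>+u. (\<Sum>j. ennreal (indicator (slab a j) u * rate_density \<beta> u)) \<partial>lborel)"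
    unfolding truncated_mass_def by (simp add: suminf_indicator_slab[OF assms])
  also have "\<dots> = (\<Sum>j. \<integral>\<^sup>+u. ennreal (indicator (slab a j) u * rate_density \<beta> u) \<partial>lborel)"
    by (rule nn_integral_suminf) (unfold slab_def, measurable)
  finally show ?thesis .
qed

lemma emeasure_slab:
  assumes "0 < a"
  shows "emeasure lborel (slab a j) = ennreal (a / ((real j + 2) * (real j + 1)))"
proof -
  have "a / (real j + 2) \<le> a / (real j + 1)" using assms by (intro divide_left_mono) auto
  moreover have "a / (real j + 1) - a / (real j + 2) = a / ((real j + 2) * (real j + 1))"
    by (simp add: field_simps)
  ultimately show ?thesis unfolding slab_def by simp
qed

lemma one_minus_exp_divide_antimono:
  fixes u v :: real
  assumes "0 < u" "u \<le> v"
  shows "(1 - exp (- v)) / v \<le> (1 - exp (- u)) / u"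
proof (rule DERIV_nonpos_imp_nonincreasing[where f="\<lambda>x. (1 - exp (- x)) / x", OF assms(2)])
  fix x assume "u \<le> x" "x \<le> v"
  then have x: "0 < x" using assms by auto
  then have "((\<lambda>x. (1 - exp (- x)) / x) has_real_derivative ((exp (- x) * x - (1 - exp (- x))) / (x * x))) (at x)"
    by (auto intro!: derivative_eq_intros simp: field_simps)
  moreover have "exp (- x) * (1 + x) \<le> exp (- x) * exp x"
    using exp_ge_add_one_self[of x] by (intro mult_left_mono) auto
  then have "(exp (- x) * x - (1 - exp (- x))) / (x * x) \<le> 0"
    using x by (intro divide_nonpos_pos) (auto simp: exp_minus field_simps)
  ultimately show "\<exists>y. ((\<lambda>x. (1 - exp (- x)) / x) has_real_derivative y) (at x) \<and> y \<le> 0" by blast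
qed

lemma rate_density_antimono:
  assumes "0 < u" "u \<le> v" "\<beta> < 1"
  shows "rate_density \<beta> v \<le> rate_density \<beta> u"
proof -
  have eq: "rate_density \<beta> x = x powr (\<beta> - 1) * ((1 - exp (- x)) / x)" if "0 < x" for x
    using that unfolding rate_density_def by (simp add: powr_diff field_simps power2_eq_square)
  have "v powr (\<beta> - 1) * ((1 - exp (- v)) / v) \<le> u powr (\<beta> - 1) * ((1 - exp (- u)) / u)"
    using assms by (intro mult_mono powr_mono2' one_minus_exp_divide_antimono) auto
  then show ?thesis using assms by (simp add: eq)
qed

lemma rate_density_divide_eq_poisson_term:
  assumes "0 < a" "0 < K" "0 < M"
  shows "rate_density \<beta> (a / K) * (a / (K * M)) = a powr (\<beta> - 1) * poisson_term \<beta> a K * (K / M)"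
proof -
  have "(a / K) powr (\<beta> - 2) = a powr (\<beta> - 2) / K powr (\<beta> - 2)"
    using assms by (simp add: powr_divide)
  also have "\<dots> = a powr (\<beta> - 1) * K powr (-\<beta>) * (K * K) / a"
    using assms by (simp add: powr_diff powr_minus power2_eq_square field_simps)
  finally show ?thesis
    unfolding rate_density_def poisson_term_def using assms by (simp add: field_simps)
qed

lemma nn_integral_slab_le:
  assumes "0 < a" "\<beta> < 1"
  shows "(\<integral>\<^sup>+u. ennreal (indicator (slab a j) u * rate_density \<beta> u) \<partial>lborel)
     \<le> ennreal (a powr (\<beta> - 1) * poisson_term \<beta> a (real j + 2) * ((real j + 2) / (real j + 1)))"
proof -
  let ?r = "rate_density \<beta> (a / (real j + 2))"
  have "(\<integral>\<^sup>+u. ennreal (indicator (slab a j) u * rate_density \<beta> u) \<partial>lborel)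
      \<le> (\<integral>\<^sup>+u. ennreal ?r * indicator (slab a j) u \<partial>lborel)"
  proof (intro nn_integral_mono)
    fix u
    show "ennreal (indicator (slab a j) u * rate_density \<beta> u) \<le> ennreal ?r * indicator (slab a j) u"
    proof (cases "u \<in> slab a j")
      case True
      then have "a / (real j + 2) < u" unfolding slab_def by auto
      then have "rate_density \<beta> u \<le> ?r" using assms by (intro rate_density_antimono) auto
      then show ?thesis using True by (simp add: ennreal_leI)
    qed simp
  qed
  also have "\<dots> = ennreal ?r * emeasure lborel (slab a j)"
    by (rule nn_integral_cmult_indicator) (simp add: slab_def)
  also have "\<dots> = ennreal (?r * (a / ((real j + 2) * (real j + 1))))"
    using assms by (simp add: emeasure_slab ennreal_mult[symmetric] rate_density_nonneg)
  also have "?r * (a / ((real j + 2) * (real j + 1)))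
     = a powr (\<beta> - 1) * poisson_term \<beta> a (real j + 2) * ((real j + 2) / (real j + 1))"
    using assms by (intro rate_density_divide_eq_poisson_term) auto
  finally show ?thesis .
qed

lemma nn_integral_slab_ge:
  assumes "0 < a" "\<beta> < 1"
  shows "ennreal (a powr (\<beta> - 1) * poisson_term \<beta> a (real j + 1) * ((real j + 1) / (real j + 2)))
     \<le> (\<integral>\<^sup>+u. ennreal (indicator (slab a j) u * rate_density \<beta> u) \<partial>lborel)"
proof -
  let ?r = "rate_density \<beta> (a / (real j + 1))"
  have "a powr (\<beta> - 1) * poisson_term \<beta> a (real j + 1) * ((real j + 1) / (real j + 2))
     = ?r * (a / ((real j + 1) * (real j + 2)))"
    using assms by (intro rate_density_divide_eq_poisson_term[symmetric]) auto
  also have "ennreal \<dots> = ennreal ?r * emeasure lborel (slab a j)"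
    using assms by (simp add: emeasure_slab ennreal_mult[symmetric] rate_density_nonneg mult.commute)
  also have "\<dots> = (\<integral>\<^sup>+u. ennreal ?r * indicator (slab a j) u \<partial>lborel)"
    by (rule nn_integral_cmult_indicator[symmetric]) (simp add: slab_def)
  also have "\<dots> \<le> (\<integral>\<^sup>+u. ennreal (indicator (slab a j) u * rate_density \<beta> u) \<partial>lborel)"
  proof (intro nn_integral_mono)
    fix u
    show "ennreal ?r * indicator (slab a j) u \<le> ennreal (indicator (slab a j) u * rate_density \<beta> u)"
    proof (cases "u \<in> slab a j")
      case True
      then have "u \<le> a / (real j + 1)" "0 < u" using mem_slab_iff[OF assms(1)] unfolding slab_def by auto
      then have "?r \<le> rate_density \<beta> u" using assms by (intro rate_density_antimono) auto
      then show ?thesis using True by (simp add: ennreal_leI)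
    qed simp
  qed
  finally show ?thesis .
qed

lemma zeta_series_comparison:
  assumes "0 < \<beta>" "\<And>j. 0 \<le> e j" "\<And>j. e j \<le> real (Suc j) powr (-1 - \<beta>)"
  shows "summable e" "suminf e \<le> zeta_series \<beta>"
proof -
  have summable_zeta: "summable (\<lambda>j. real (Suc j) powr (-1 - \<beta>))"
    using assms(1) by (intro summable_Suc_powr) auto
  show "summable e"
  proof (rule summable_comparison_test'[OF summable_zeta])
    show "norm (e j) \<le> real (Suc j) powr (-1 - \<beta>)" for j
      using assms(2,3)[of j] by simp
  qed
  show "suminf e \<le> zeta_series \<beta>"
    unfolding zeta_series_def using assms(3) \<open>summable e\<close> summable_zeta by (rule suminf_le)
qed

lemma powr_divide_self:
  fixes K :: real
  assumes "0 < K"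
  shows "K powr (-\<beta>) / K = K powr (-1 - \<beta>)"
proof -
  have "K powr (-\<beta> - 1) = K powr (-\<beta>) / K"
    using assms by (simp add: powr_diff)
  moreover have "-\<beta> - 1 = -1 - \<beta>" by simp
  ultimately show ?thesis by simp
qed

lemma truncated_mass_ge:
  assumes "0 < a" "0 < \<beta>" "\<beta> < 1"
  shows "ennreal (a powr (\<beta> - 1) * (poissonized_rate \<beta> a - zeta_series \<beta>)) \<le> truncated_mass \<beta> a"
proof -
  define t where "t j = poisson_term \<beta> a (real j + 1)" for j
  define e where "e j = t j / (real j + 2)" for j
  have t: "0 \<le> t j" "t j \<le> real (Suc j) powr (-\<beta>)" for j
    unfolding t_def using assms poisson_term_nonneg poisson_term_le_powr by (auto simp: add.commute)
  have st: "summable t" and rate: "poissonized_rate \<beta> a = suminf t"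
    using summable_poisson_term[of \<beta> a] assms
    unfolding t_def poissonized_rate_def by (simp_all add: add.commute)
  have "e j \<le> real (Suc j) powr (-\<beta>) / real (Suc j)" for j
    unfolding e_def using t[of j] by (intro frac_le) auto
  then have e: "summable e" "suminf e \<le> zeta_series \<beta>"
    using t zeta_series_comparison[OF assms(2), of e] by (auto simp: e_def powr_divide_self)
  have e_le_t: "e j \<le> t j" for j
  proof -
    have "t j * 1 \<le> t j * (real j + 2)" using t[of j] by (intro mult_left_mono) auto
    then show ?thesis unfolding e_def by (simp add: divide_le_eq)
  qed
  have "a powr (\<beta> - 1) * (poissonized_rate \<beta> a - zeta_series \<beta>) \<le> a powr (\<beta> - 1) * (suminf t - suminf e)"
    using rate e by (intro mult_left_mono) auto
  also have "\<dots> = (\<Sum>j. a powr (\<beta> - 1) * (t j - e j))"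
    using st e by (simp add: suminf_mult suminf_diff summable_diff)
  finally have "ennreal (a powr (\<beta> - 1) * (poissonized_rate \<beta> a - zeta_series \<beta>))
      \<le> (\<Sum>j. ennreal (a powr (\<beta> - 1) * (t j - e j)))"
    using st e e_le_t
    by (subst suminf_ennreal2) (auto intro!: ennreal_leI summable_mult summable_diff)
  also have "\<dots> \<le> (\<Sum>j. \<integral>\<^sup>+u. ennreal (indicator (slab a j) u * rate_density \<beta> u) \<partial>lborel)"
  proof (intro suminf_le summableI)
    fix j
    have "a powr (\<beta> - 1) * (t j - e j)
        = a powr (\<beta> - 1) * poisson_term \<beta> a (real j + 1) * ((real j + 1) / (real j + 2))"
      unfolding e_def t_def by (simp add: field_simps)
    then show "ennreal (a powr (\<beta> - 1) * (t j - e j))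
        \<le> (\<integral>\<^sup>+u. ennreal (indicator (slab a j) u * rate_density \<beta> u) \<partial>lborel)"
      using nn_integral_slab_ge[OF assms(1,3)] by simp
  qed
  also have "\<dots> = truncated_mass \<beta> a"
    by (rule truncated_mass_eq_suminf_slab[OF assms(1), symmetric])
  finally show ?thesis .
qed

lemma truncated_mass_le:
  assumes "0 < a" "0 < \<beta>" "\<beta> < 1"
  shows "truncated_mass \<beta> a \<le> ennreal (a powr (\<beta> - 1) * (poissonized_rate \<beta> a + zeta_series \<beta>))"
proof -
  define t where "t j = poisson_term \<beta> a (real j + 1)" for j
  define e where "e j = t (Suc j) / (real j + 1)" for j
  have t: "0 \<le> t j" "t j \<le> real (Suc j) powr (-\<beta>)" for j
    unfolding t_def using assms poisson_term_nonneg poisson_term_le_powr by (auto simp: add.commute)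
  have "summable t" and rate_eq: "poissonized_rate \<beta> a = suminf t"
    using summable_poisson_term[of \<beta> a] assms
    unfolding t_def poissonized_rate_def by (simp_all add: add.commute)
  then have st: "summable (\<lambda>j. t (Suc j))" and rate: "(\<Sum>j. t (Suc j)) \<le> poissonized_rate \<beta> a"
    using suminf_split_head[of t] t(1)[of 0] summable_Suc_iff[of t] by simp_all
  have "t (Suc j) \<le> real (Suc j) powr (-\<beta>)" for j
    using order_trans[OF t(2)[of "Suc j"] powr_mono2'[of "-\<beta>" "real (Suc j)" "real (Suc (Suc j))"]] assms
    by simp
  then have "e j \<le> real (Suc j) powr (-\<beta>) / real (Suc j)" for j
    unfolding e_def by (simp add: add.commute divide_right_mono)
  moreover have e_nonneg: "0 \<le> e j" for j
    unfolding e_def using t(1) by simp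
  ultimately have e: "summable e" "suminf e \<le> zeta_series \<beta>"
    using zeta_series_comparison[OF assms(2), of e] by (auto simp: powr_divide_self)
  have "truncated_mass \<beta> a
      = (\<Sum>j. \<integral>\<^sup>+u. ennreal (indicator (slab a j) u * rate_density \<beta> u) \<partial>lborel)"
    by (rule truncated_mass_eq_suminf_slab[OF assms(1)])
  also have "\<dots> \<le> (\<Sum>j. ennreal (a powr (\<beta> - 1) * (t (Suc j) + e j)))"
  proof (intro suminf_le summableI)
    fix j
    have "a powr (\<beta> - 1) * poisson_term \<beta> a (real j + 2) * ((real j + 2) / (real j + 1))
        = a powr (\<beta> - 1) * (t (Suc j) + e j)"
      unfolding e_def t_def by (simp add: field_simps)
    then show "(\<integral>\<^sup>+u. ennreal (indicator (slab a j) u * rate_density \<beta> u) \<partial>lborel)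
        \<le> ennreal (a powr (\<beta> - 1) * (t (Suc j) + e j))"
      using nn_integral_slab_le[OF assms(1,3), of j] by simp
  qed
  also have "\<dots> = ennreal (\<Sum>j. a powr (\<beta> - 1) * (t (Suc j) + e j))"
    using st e e_nonneg t(1) by (intro suminf_ennreal2 summable_mult summable_add) auto
  also have "(\<Sum>j. a powr (\<beta> - 1) * (t (Suc j) + e j)) = a powr (\<beta> - 1) * ((\<Sum>j. t (Suc j)) + suminf e)"
    using st e by (simp add: suminf_mult suminf_add summable_add)
  also have "\<dots> \<le> ennreal (a powr (\<beta> - 1) * (poissonized_rate \<beta> a + zeta_series \<beta>))"
    using rate e by (intro ennreal_leI mult_left_mono) auto
  finally show ?thesis .
qed

section \<open>Asymptotics of the Poissonized rate\<close>

lemma truncated_mass_mono: "a \<le> b \<Longrightarrow> truncated_mass \<beta> a \<le> truncated_mass \<beta> b"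
  unfolding truncated_mass_def
  by (intro nn_integral_mono ennreal_leI) (auto simp: indicator_def rate_density_nonneg)

lemma truncated_mass_le_total:
  assumes "0 < \<beta>" "\<beta> < 1"
  shows "truncated_mass \<beta> a \<le> ennreal (Gamma \<beta> / (1 - \<beta>))"
  unfolding nn_integral_rate_density[OF assms, symmetric] truncated_mass_def
  by (intro nn_integral_mono ennreal_leI) (auto simp: indicator_def rate_density_nonneg)

lemma truncated_mass_LIMSEQ:
  assumes "0 < \<beta>" "\<beta> < 1"
  shows "(\<lambda>N. truncated_mass \<beta> (real N)) \<longlonglongrightarrow> ennreal (Gamma \<beta> / (1 - \<beta>))"
proof -
  have "incseq (\<lambda>N. {0<..real N})"
    by (auto simp: incseq_def)
  moreover have "(\<Union>N. {0<..real N}) = {0<..}"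
    using real_arch_simple by (auto intro: order_trans)
  ultimately have "(\<lambda>N. truncated_mass \<beta> (real N))
      \<longlonglongrightarrow> (\<integral>\<^sup>+u. ennreal (indicator {0<..} u * rate_density \<beta> u) \<partial>lborel)"
    using nn_integral_indicator_incseq_LIMSEQ[of "\<lambda>N. {0<..real N}" "rate_density \<beta>"]
    unfolding truncated_mass_def by simp
  then show ?thesis
    unfolding nn_integral_rate_density[OF assms] .
qed

lemma truncated_mass_eq_ennreal:
  assumes "0 < \<beta>" "\<beta> < 1"
  shows "truncated_mass \<beta> a = ennreal (enn2real (truncated_mass \<beta> a))"
proof -
  have "truncated_mass \<beta> a \<noteq> top"
    using truncated_mass_le_total[OF assms, of a] by (auto simp: top_unique)
  then show ?thesis by (simp add: less_top ennreal_enn2real)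
qed

text \<open>A monotone function converging along the integers converges at infinity.\<close>
lemma tendsto_truncated_mass:
  assumes "0 < \<beta>" "\<beta> < 1"
  shows "((\<lambda>a. enn2real (truncated_mass \<beta> a)) \<longlongrightarrow> Gamma \<beta> / (1 - \<beta>)) at_top"
proof (rule order_tendstoI)
  let ?m = "\<lambda>a. enn2real (truncated_mass \<beta> a)"
  have total_nonneg: "0 \<le> Gamma \<beta> / (1 - \<beta>)" using assms Gamma_real_pos[of \<beta>] by simp
  have seq: "(\<lambda>N. ?m (real N)) \<longlonglongrightarrow> Gamma \<beta> / (1 - \<beta>)"
    using truncated_mass_LIMSEQ[OF assms] total_nonneg
    by (intro tendsto_ennrealD) (auto simp flip: truncated_mass_eq_ennreal[OF assms])
  have mono: "?m a \<le> ?m b" if "a \<le> b" for a b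
    using truncated_mass_mono[OF that, of \<beta>] truncated_mass_le_total[OF assms, of b]
    by (meson enn2real_mono ennreal_less_top le_less_trans)
  fix y assume "y < Gamma \<beta> / (1 - \<beta>)"
  then obtain N where N: "y < ?m (real N)"
    using order_tendstoD(1)[OF seq] by (meson eventually_sequentially order_refl)
  have above: "y < ?m a" if "real N \<le> a" for a
    using mono[OF that] N by linarith
  show "eventually (\<lambda>a. y < ?m a) at_top"
    by (rule eventually_mono[OF eventually_ge_at_top[of "real N"] above])
next
  fix y assume "Gamma \<beta> / (1 - \<beta>) < y"
  moreover have "enn2real (truncated_mass \<beta> a) \<le> Gamma \<beta> / (1 - \<beta>)" for a
    using enn2real_mono[OF truncated_mass_le_total[OF assms, of a] ennreal_less_top]
      assms Gamma_real_pos[of \<beta>] by simp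
  ultimately show "eventually (\<lambda>a. enn2real (truncated_mass \<beta> a) < y) at_top"
    by (intro always_eventually) (meson le_less_trans)
qed

lemma poissonized_rate_asymptotics:
  assumes "0 < \<beta>" "\<beta> < 1"
  shows "((\<lambda>a. a powr (\<beta> - 1) * poissonized_rate \<beta> a) \<longlongrightarrow> Gamma \<beta> / (1 - \<beta>)) at_top"
proof -
  let ?m = "\<lambda>a. enn2real (truncated_mass \<beta> a)"
  let ?Z = "\<lambda>a. a powr (\<beta> - 1) * zeta_series \<beta>"
  have "((\<lambda>a::real. a powr (\<beta> - 1)) \<longlongrightarrow> 0) at_top" using assms by real_asymp
  then have Z: "(?Z \<longlongrightarrow> 0) at_top"
    using tendsto_mult_left_zero by blast
  have zeta_nonneg: "0 \<le> zeta_series \<beta>"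
    unfolding zeta_series_def using assms by (intro suminf_nonneg summable_Suc_powr) auto
  have bounds: "?m a - ?Z a \<le> a powr (\<beta> - 1) * poissonized_rate \<beta> a \<and>
      a powr (\<beta> - 1) * poissonized_rate \<beta> a \<le> ?m a + ?Z a" if "0 < a" for a
  proof -
    have "ennreal (a powr (\<beta> - 1) * (poissonized_rate \<beta> a - zeta_series \<beta>)) \<le> ennreal (?m a)"
      using truncated_mass_ge[OF that assms] by (simp flip: truncated_mass_eq_ennreal[OF assms])
    moreover have "ennreal (?m a) \<le> ennreal (a powr (\<beta> - 1) * (poissonized_rate \<beta> a + zeta_series \<beta>))"
      using truncated_mass_le[OF that assms] by (simp flip: truncated_mass_eq_ennreal[OF assms])
    moreover have "0 \<le> a powr (\<beta> - 1) * (poissonized_rate \<beta> a + zeta_series \<beta>)"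
      using poissonized_rate_nonneg[of \<beta> a] assms that zeta_nonneg by simp
    ultimately show ?thesis
      by (simp add: ennreal_le_iff algebra_simps)
  qed
  show ?thesis
  proof (rule tendsto_sandwich)
    show "\<forall>\<^sub>F a in at_top. ?m a - ?Z a \<le> a powr (\<beta> - 1) * poissonized_rate \<beta> a"
      using eventually_gt_at_top[of "0::real"] by (rule eventually_mono) (use bounds in blast)
    show "\<forall>\<^sub>F a in at_top. a powr (\<beta> - 1) * poissonized_rate \<beta> a \<le> ?m a + ?Z a"
      using eventually_gt_at_top[of "0::real"] by (rule eventually_mono) (use bounds in blast)
    show "((\<lambda>a. ?m a - ?Z a) \<longlongrightarrow> Gamma \<beta> / (1 - \<beta>)) at_top"
         "((\<lambda>a. ?m a + ?Z a) \<longlongrightarrow> Gamma \<beta> / (1 - \<beta>)) at_top"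
      using tendsto_diff[OF tendsto_truncated_mass[OF assms] Z]
        tendsto_add[OF tendsto_truncated_mass[OF assms] Z] by simp_all
  qed
qed

section \<open>The case \<open>\<beta> < 1\<close>\<close>

lemma harm_le_ln_add_1: "1 \<le> n \<Longrightarrow> harm n \<le> ln (real n) + (1::real)"
  using euler_mascheroni_sequence_decreasing[of 1 n] by (simp add: harm_def)

lemma sum_Suc_powr_le:
  assumes "1 \<le> n" "\<beta> \<le> 1"
  shows "(\<Sum>k<n-1. real (Suc k) powr (-\<beta>)) \<le> real n powr (1 - \<beta>) * (ln (real n) + 1)"
proof -
  have "(\<Sum>k<n-1. real (Suc k) powr (-\<beta>)) \<le> (\<Sum>k<n-1. real n powr (1 - \<beta>) * inverse (real (Suc k)))"
  proof (intro sum_mono)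
    fix k assume "k \<in> {..<n-1}"
    then have "real (Suc k) powr (1 - \<beta>) \<le> real n powr (1 - \<beta>)"
      using assms by (intro powr_mono2) auto
    moreover have "real (Suc k) powr (-\<beta>) = real (Suc k) powr (1 - \<beta>) * inverse (real (Suc k))"
      by (simp add: powr_diff powr_minus field_simps)
    ultimately show "real (Suc k) powr (-\<beta>) \<le> real n powr (1 - \<beta>) * inverse (real (Suc k))"
      by (simp add: mult_right_mono)
  qed
  also have "\<dots> = real n powr (1 - \<beta>) * harm (n - 1)"
    by (simp add: harm_altdef sum_distrib_left)
  also have "\<dots> \<le> real n powr (1 - \<beta>) * (ln (real n) + 1)"
  proof (intro mult_left_mono)
    have "harm (n - 1) \<le> (harm n :: real)" by (intro harm_mono) auto
    also have "\<dots> \<le> ln (real n) + 1" using assms by (intro harm_le_ln_add_1)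
    finally show "harm (n - 1) \<le> ln (real n) + 1" .
  qed simp
  finally show ?thesis .
qed

lemma scaled_poissonized_rate_pairs_LIMSEQ:
  assumes "0 < \<beta>" "\<beta> < 1"
  shows "(\<lambda>n. real n powr (2 * (\<beta> - 1)) * poissonized_rate \<beta> (pairs n))
      \<longlonglongrightarrow> 2 powr (\<beta> - 1) * Gamma \<beta> / (1 - \<beta>)"
proof -
  have pairs_lim: "filterlim pairs at_top sequentially"
    unfolding pairs_def by real_asymp
  have rate: "(\<lambda>n. pairs n powr (\<beta> - 1) * poissonized_rate \<beta> (pairs n)) \<longlonglongrightarrow> Gamma \<beta> / (1 - \<beta>)"
    using filterlim_compose[OF poissonized_rate_asymptotics[OF assms] pairs_lim] by (simp add: o_def)
  have "(\<lambda>n. real n powr (2 * (\<beta> - 1)) * pairs n powr (1 - \<beta>)) \<longlonglongrightarrow> (1 / 2) powr (1 - \<beta>)"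
    unfolding pairs_def using assms by real_asymp
  also have "(1 / 2 :: real) powr (1 - \<beta>) = 2 powr (\<beta> - 1)"
    by (simp add: powr_divide powr_minus_divide[symmetric])
  finally have "(\<lambda>n. (real n powr (2 * (\<beta> - 1)) * pairs n powr (1 - \<beta>))
      * (pairs n powr (\<beta> - 1) * poissonized_rate \<beta> (pairs n)))
      \<longlonglongrightarrow> 2 powr (\<beta> - 1) * (Gamma \<beta> / (1 - \<beta>))"
    by (rule tendsto_mult[OF _ rate])
  moreover have "eventually (\<lambda>n. 0 < pairs n) sequentially"
    using pairs_lim by (simp add: filterlim_at_top_dense)
  then have "eventually (\<lambda>n. (real n powr (2 * (\<beta> - 1)) * pairs n powr (1 - \<beta>))
      * (pairs n powr (\<beta> - 1) * poissonized_rate \<beta> (pairs n))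
      = real n powr (2 * (\<beta> - 1)) * poissonized_rate \<beta> (pairs n)) sequentially"
    by (rule eventually_mono) (simp add: powr_add[symmetric] mult_ac)
  ultimately show ?thesis
    by (simp add: Lim_transform_eventually)
qed

lemma coal_rate_asymptotics_lt_1:
  assumes "0 < \<beta>" "\<beta> < 1"
  shows "(\<lambda>n. real n powr (2 * (\<beta> - 1)) * coal_rate \<beta> n) \<longlonglongrightarrow> 2 powr (\<beta> - 1) * Gamma \<beta> / (1 - \<beta>)"
proof (rule tendsto_sandwich)
  let ?G = "\<lambda>n. real n powr (2 * (\<beta> - 1)) * poissonized_rate \<beta> (pairs n)"
  let ?E = "\<lambda>n. real n powr (\<beta> - 1) * (ln (real n) + 1)"
  show "(?G \<longlongrightarrow> 2 powr (\<beta> - 1) * Gamma \<beta> / (1 - \<beta>)) sequentially"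
    by (rule scaled_poissonized_rate_pairs_LIMSEQ[OF assms])
  have "?E \<longlonglongrightarrow> 0" using assms by real_asymp
  then show "((\<lambda>n. ?G n + ?E n) \<longlongrightarrow> 2 powr (\<beta> - 1) * Gamma \<beta> / (1 - \<beta>)) sequentially"
    using tendsto_add[OF scaled_poissonized_rate_pairs_LIMSEQ[OF assms]] by fastforce
  show "\<forall>\<^sub>F n in sequentially. ?G n \<le> real n powr (2 * (\<beta> - 1)) * coal_rate \<beta> n"
    using poissonized_rate_le_coal_rate[OF assms(1)] by (intro always_eventually allI mult_left_mono) auto
  have "real n powr (2 * (\<beta> - 1)) * coal_rate \<beta> n \<le> ?G n + ?E n" if "1 \<le> n" for n
  proof -
    have "real n powr (2 * (\<beta> - 1)) * coal_rate \<beta> n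
        \<le> real n powr (2 * (\<beta> - 1)) * (poissonized_rate \<beta> (pairs n) + real n powr (1 - \<beta>) * (ln (real n) + 1))"
      using coal_rate_le_poissonized_rate[OF assms(1) that] sum_Suc_powr_le[OF that, of \<beta>] assms
      by (intro mult_left_mono) auto
    also have "real n powr (2 * (\<beta> - 1)) * real n powr (1 - \<beta>) = real n powr (\<beta> - 1)"
      using that by (simp add: powr_add[symmetric] algebra_simps)
    then have "real n powr (2 * (\<beta> - 1)) * (poissonized_rate \<beta> (pairs n) + real n powr (1 - \<beta>) * (ln (real n) + 1))
        = ?G n + ?E n"
      by (simp add: algebra_simps)
    finally show ?thesis .
  qed
  then show "\<forall>\<^sub>F n in sequentially. real n powr (2 * (\<beta> - 1)) * coal_rate \<beta> n \<le> ?G n + ?E n"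
    using eventually_ge_at_top[of "1::nat"] by (rule eventually_mono[rotated])
qed

section \<open>The case \<open>\<beta> = 1\<close>\<close>

lemma telescope_inverse_sums:
  "(\<lambda>j. 1 / real (j + M) - 1 / real (Suc (j + M))) sums (1 / real M)"
proof -
  have "(\<lambda>j. 1 / real (j + M)) \<longlonglongrightarrow> 0" by real_asymp
  then show ?thesis using telescope_sums' by fastforce
qed

lemma coal_rate_1_term_le:
  assumes "1 \<le> k"
  shows "real (Suc k) powr -1 * coll_prob n (Suc k) \<le> pairs n * (1 / real k - 1 / real (Suc k))"
proof -
  have "real (Suc k) powr -1 * coll_prob n (Suc k) = (1 / real (Suc k)) * coll_prob n (Suc k)"
    by simp
  also have "\<dots> \<le> (1 / real (Suc k)) * (pairs n / real (Suc k))"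
    using coll_prob_le_pairs_div[of "Suc k" n] by (intro mult_left_mono) auto
  also have "\<dots> \<le> pairs n * (1 / (real k * real (Suc k)))"
    using pairs_nonneg[of n] assms by (simp add: divide_left_mono mult_right_mono mult_pos_pos)
  also have "1 / (real k * real (Suc k)) = 1 / real k - 1 / real (Suc k)"
    using assms by (simp add: field_simps)
  finally show ?thesis .
qed

text \<open>Bound \<open>P(C\<^sup>k\<^sub>n)\<close> by \<open>1\<close> for \<open>k < \<lceil>m\<rceil>\<close> and by \<open>m/k\<close> beyond; the tail then
  telescopes to at most \<open>1\<close>.\<close>
lemma coal_rate_1_le:
  assumes "2 \<le> n"
  shows "coal_rate 1 n \<le> ln (pairs n + 1) + 2"
proof -
  define m where "m = pairs n"
  define M where "M = nat \<lceil>m\<rceil>"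
  have m: "1 \<le> m" unfolding m_def using pairs_ge_1[OF assms] .
  have M: "m \<le> real M" "real M \<le> m + 1" "1 \<le> M" unfolding M_def using m by linarith+
  define b where "b k = (if k < M then 1 / real (Suc k) else m * (1 / real k - 1 / real (Suc k)))" for k
  have shift: "b (j + M) = m * (1 / real (j + M) - 1 / real (Suc (j + M)))" for j
    unfolding b_def by simp
  have "summable (\<lambda>j. b (j + M))" unfolding shift
    using telescope_inverse_sums by (intro summable_mult) (auto simp: sums_iff)
  then have sb: "summable b" by (simp add: summable_iff_shift)
  have "coal_rate 1 n \<le> suminf b"
    unfolding coal_rate_def
  proof (intro suminf_le summable_coal_rate sb)
    fix k
    show "real (Suc k) powr - 1 * coll_prob n (Suc k) \<le> b k"
    proof (cases "k < M")
      case True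
      then show ?thesis using coll_prob_le_1[of "Suc k" n]
        by (simp add: b_def powr_minus_divide divide_right_mono)
    next
      case False
      then show ?thesis using M coal_rate_1_term_le[of k n] by (simp add: b_def m_def)
    qed
  qed simp
  also have "suminf b = (\<Sum>j. b (j + M)) + sum b {..<M}"
    by (rule suminf_split_initial_segment[OF sb])
  also have "(\<Sum>j. b (j + M)) = m * (1 / real M)"
    unfolding shift using telescope_inverse_sums by (simp add: suminf_mult sums_iff)
  also have "sum b {..<M} = harm M"
    by (simp add: b_def harm_altdef divide_inverse)
  also have "m * (1 / real M) \<le> 1" using M by (simp add: field_simps)
  also have "harm M \<le> ln (real M) + (1::real)" using M by (intro harm_le_ln_add_1) simp
  also have "ln (real M) \<le> ln (m + 1)" using M by simp
  finally show ?thesis unfolding m_def by simp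
qed

lemma coal_rate_1_ge:
  assumes "2 \<le> n" "0 < c"
  shows "(1 - exp (- c)) * ln (pairs n / c) \<le> coal_rate 1 n"
proof -
  define m where "m = pairs n"
  have m: "1 \<le> m" unfolding m_def using pairs_ge_1[OF assms(1)] .
  define N where "N = nat \<lfloor>m / c\<rfloor>"
  have "0 \<le> m / c" using m assms by simp
  then have N: "m / c < real N + 1" "real N \<le> m / c" unfolding N_def by linarith+
  have "(1 - exp (- c)) * ln (m / c) \<le> (1 - exp (- c)) * ln (real N + 1)"
    using N m assms by (intro mult_left_mono) auto
  also have "\<dots> \<le> (1 - exp (- c)) * harm N"
    using assms by (intro mult_left_mono ln_le_harm) auto
  also have "\<dots> = (\<Sum>k<N. (1 - exp (- c)) * (1 / real (Suc k)))"
    by (simp add: harm_altdef sum_distrib_left divide_inverse)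
  also have "\<dots> \<le> (\<Sum>k<N. real (Suc k) powr (-1) * coll_prob n (Suc k))"
  proof (intro sum_mono)
    fix k assume "k \<in> {..<N}"
    then have "real (Suc k) \<le> real N" by simp
    then have "real (Suc k) \<le> m / c" using N by linarith
    then have "c \<le> m / real (Suc k)" using assms by (simp add: field_simps)
    then have "1 - exp (- c) \<le> 1 - exp (- m / real (Suc k))" by simp
    also have "\<dots> \<le> coll_prob n (Suc k)"
      using one_minus_exp_le_coll_prob[of "Suc k" n] unfolding m_def by simp
    finally show "(1 - exp (- c)) * (1 / real (Suc k)) \<le> real (Suc k) powr (-1) * coll_prob n (Suc k)"
      by (simp add: powr_minus_divide divide_right_mono)
  qed
  also have "\<dots> \<le> coal_rate 1 n"
    unfolding coal_rate_def
    by (intro sum_le_suminf summable_coal_rate) (auto simp: coll_prob_nonneg)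
  finally show ?thesis unfolding m_def .
qed

lemma eventually_less_coal_rate_1_div_ln:
  assumes "y < 2"
  shows "eventually (\<lambda>n. y < coal_rate 1 n / ln (real n)) sequentially"
proof -
  \<comment> \<open>\<open>c\<close> is chosen so large that \<open>(1 - exp (-c)) \<cdot> 2 > y\<close>.\<close>
  define c where "c = max 1 (ln (4 / (2 - y)))"
  have c: "0 < c" unfolding c_def by simp
  have "exp (- c) \<le> exp (- ln (4 / (2 - y)))" unfolding c_def by simp
  also have "\<dots> = (2 - y) / 4" using assms by (simp add: exp_minus)
  finally have "y < (1 - exp (- c)) * 2" using assms by simp
  moreover have "(\<lambda>n. (1 - exp (- c)) * (ln (pairs n) - ln c) / ln (real n)) \<longlonglongrightarrow> (1 - exp (- c)) * 2"
    unfolding pairs_def by real_asymp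
  ultimately have "eventually (\<lambda>n. y < (1 - exp (- c)) * (ln (pairs n) - ln c) / ln (real n)) sequentially"
    by (rule order_tendstoD(1)[rotated])
  then show ?thesis
    using eventually_ge_at_top[of "2::nat"]
  proof eventually_elim
    case (elim n)
    have "ln (pairs n / c) = ln (pairs n) - ln c"
      using pairs_ge_1[OF elim(2)] c by (simp add: ln_div)
    then have "(1 - exp (- c)) * (ln (pairs n) - ln c) / ln (real n) \<le> coal_rate 1 n / ln (real n)"
      using coal_rate_1_ge[OF elim(2) c] elim(2) by (intro divide_right_mono) auto
    then show ?case using elim(1) by linarith
  qed
qed

lemma eventually_coal_rate_1_div_ln_less:
  assumes "2 < y"
  shows "eventually (\<lambda>n. coal_rate 1 n / ln (real n) < y) sequentially"
proof -
  have "(\<lambda>n. (ln (pairs n + 1) + 2) / ln (real n)) \<longlonglongrightarrow> 2"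
    unfolding pairs_def by real_asymp
  then have "eventually (\<lambda>n. (ln (pairs n + 1) + 2) / ln (real n) < y) sequentially"
    using assms by (rule order_tendstoD(2))
  then show ?thesis
    using eventually_ge_at_top[of "2::nat"]
  proof eventually_elim
    case (elim n)
    have "coal_rate 1 n / ln (real n) \<le> (ln (pairs n + 1) + 2) / ln (real n)"
      using coal_rate_1_le[OF elim(2)] elim(2) by (intro divide_right_mono) auto
    then show ?case using elim(1) by linarith
  qed
qed

theorem mainTheorem5:
  shows "(\<forall>\<beta>::real. 0 < \<beta> \<and> \<beta> < 1 \<longrightarrow>
           ((\<lambda>n. real n powr (2 * (\<beta> - 1)) * coal_rate \<beta> n)
              \<longlonglongrightarrow> 2 powr (\<beta> - 1) * Gamma \<beta> / (1 - \<beta>)))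
       \<and> ((\<lambda>n. coal_rate 1 n / ln (real n)) \<longlonglongrightarrow> 2)"
proof (intro conjI allI impI)
  fix \<beta> :: real assume "0 < \<beta> \<and> \<beta> < 1"
  then show "(\<lambda>n. real n powr (2 * (\<beta> - 1)) * coal_rate \<beta> n) \<longlonglongrightarrow> 2 powr (\<beta> - 1) * Gamma \<beta> / (1 - \<beta>)"
    using coal_rate_asymptotics_lt_1 by blast
next
  show "(\<lambda>n. coal_rate 1 n / ln (real n)) \<longlonglongrightarrow> 2"
    by (rule order_tendstoI)
      (auto intro: eventually_less_coal_rate_1_div_ln eventually_coal_rate_1_div_ln_less)
qed

end
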